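(* Let $n\ge 2$, $1\le r\le n-1$, and let $h(q)=q^n+q^ra_r+q^{r-1}a_{r-1}+\dots+qa_1+a_0$ with $a_0,\dots,a_r\in\mathbb{H}$ and $a_r\neq 0$. Put $\lambda=\big(\max_{0\le j\le r}|a_j|\big)^{1/n}$. Then every zero $q\in\mathbb{H}$ of $h$ satisfies $$|q|\le \lambda+\max\{\lambda^2,\lambda^{r+1}\}.$$
   Context: $\mathbb{H}$ denotes the real quaternions with the Euclidean norm $|q|=\sqrt{q\bar q}$. The polynomial $h$ (whose coefficients of $q^{r+1},\dots,q^{n-1}$ vanish) has coefficients written to the right of the powers and is evaluated at $q\in\mathbb{H}$ by direct substitution, $h(q)=q^n+q^ra_r+\dots+qa_1+a_0$; a zero of $h$ is a $q\in\mathbb{H}$ with $h(q)=0$. *)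

theory Defs
  imports Complex_Main
begin

text \<open>Real quaternions q = Re + Im1 i + Im2 j + Im3 k, with Hamilton's multiplication
  (i^2 = j^2 = k^2 = ijk = -1).\<close>

datatype quat = Quat (qRe: real) (qIm1: real) (qIm2: real) (qIm3: real)

definition qzero :: quat where "qzero = Quat 0 0 0 0"
definition qone :: quat where "qone = Quat 1 0 0 0"

definition qadd :: "quat \<Rightarrow> quat \<Rightarrow> quat" where
  "qadd p q = Quat (qRe p + qRe q) (qIm1 p + qIm1 q) (qIm2 p + qIm2 q) (qIm3 p + qIm3 q)"

definition qmult :: "quat \<Rightarrow> quat \<Rightarrow> quat" where
  "qmult p q = Quat
     (qRe p * qRe q - qIm1 p * qIm1 q - qIm2 p * qIm2 q - qIm3 p * qIm3 q)
     (qRe p * qIm1 q + qIm1 p * qRe q + qIm2 p * qIm3 q - qIm3 p * qIm2 q)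
     (qRe p * qIm2 q - qIm1 p * qIm3 q + qIm2 p * qRe q + qIm3 p * qIm1 q)
     (qRe p * qIm3 q + qIm1 p * qIm2 q - qIm2 p * qIm1 q + qIm3 p * qRe q)"

definition qnorm :: "quat \<Rightarrow> real" where
  "qnorm q = sqrt ((qRe q)\<^sup>2 + (qIm1 q)\<^sup>2 + (qIm2 q)\<^sup>2 + (qIm3 q)\<^sup>2)"

primrec qpow :: "quat \<Rightarrow> nat \<Rightarrow> quat" where
  "qpow q 0 = qone"
| "qpow q (Suc m) = qmult q (qpow q m)"

definition heval :: "nat \<Rightarrow> nat \<Rightarrow> (nat \<Rightarrow> quat) \<Rightarrow> quat \<Rightarrow> quat" where
  "heval n r a q = qadd (qpow q n) (foldr (\<lambda>j acc. qadd (qmult (qpow q j) (a j)) acc) [0..<Suc r] qzero)"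

end

theory Submission
  imports Defs "HOL-Analysis.Analysis"
begin

text \<open>Since the quaternion norm is multiplicative and subadditive, a zero \<open>q\<close> of \<open>h\<close>
  satisfies \<open>|q|^n \<le> \<lambda>^n (1 + |q| + \<dots> + |q|^r)\<close>. Put \<open>|q| = \<lambda> t\<close> and \<open>c = max \<lambda> \<lambda>^r\<close>;
  then \<open>\<lambda>^j \<le> c\<close> for \<open>1 \<le> j \<le> r\<close>, so \<open>t^n \<le> 1 + c (t + \<dots> + t^r)\<close>. For \<open>t > 1\<close> the
  identity \<open>t^n - 1 = (t - 1)(1 + t + \<dots> + t^(n-1))\<close> together with \<open>r < n\<close> forces \<open>t - 1 \<le> c\<close>,
  that is \<open>|q| \<le> \<lambda> + \<lambda> c = \<lambda> + max \<lambda>^2 \<lambda>^(r+1)\<close>.\<close>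

definition quat_vec :: "quat \<Rightarrow> complex \<times> complex" where
  "quat_vec p = (Complex (qRe p) (qIm1 p), Complex (qIm2 p) (qIm3 p))"

lemma qnorm_eq_norm_quat_vec: "qnorm p = norm (quat_vec p)"
  unfolding qnorm_def quat_vec_def norm_prod_def by (simp add: cmod_def add.assoc)

lemma qnorm_nonneg: "0 \<le> qnorm p"
  by (simp add: qnorm_def)

lemma qnorm_qzero: "qnorm qzero = 0"
  by (simp add: qnorm_def qzero_def)

lemma qnorm_pos: "p \<noteq> qzero \<Longrightarrow> 0 < qnorm p"
  by (cases p) (auto simp: qnorm_eq_norm_quat_vec quat_vec_def qzero_def complex_eq_iff zero_prod_def)

lemma qnorm_qadd_le: "qnorm (qadd p q) \<le> qnorm p + qnorm q"
proof -
  have "quat_vec (qadd p q) = quat_vec p + quat_vec q"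
    by (simp add: quat_vec_def qadd_def complex_eq_iff)
  then show ?thesis
    unfolding qnorm_eq_norm_quat_vec by (metis norm_triangle_ineq)
qed

lemma qnorm_qmult: "qnorm (qmult p q) = qnorm p * qnorm q"
proof -
  have "(qRe (qmult p q))\<^sup>2 + (qIm1 (qmult p q))\<^sup>2 + (qIm2 (qmult p q))\<^sup>2 + (qIm3 (qmult p q))\<^sup>2
     = ((qRe p)\<^sup>2 + (qIm1 p)\<^sup>2 + (qIm2 p)\<^sup>2 + (qIm3 p)\<^sup>2) * ((qRe q)\<^sup>2 + (qIm1 q)\<^sup>2 + (qIm2 q)\<^sup>2 + (qIm3 q)\<^sup>2)"
    by (simp add: qmult_def power2_eq_square algebra_simps)
  then show ?thesis
    unfolding qnorm_def by (simp add: real_sqrt_mult)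
qed

lemma qnorm_qone: "qnorm qone = 1"
  by (simp add: qnorm_def qone_def)

lemma qnorm_qpow: "qnorm (qpow q n) = qnorm q ^ n"
  by (induction n) (simp_all add: qnorm_qmult qnorm_qone)

lemma qnorm_eq_if_qadd_eq_qzero: "qadd p s = qzero \<Longrightarrow> qnorm p = qnorm s"
  by (cases p; cases s) (auto simp: qadd_def qzero_def qnorm_def power2_eq_square add_eq_0_iff)

lemma qnorm_foldr_le:
  "qnorm (foldr (\<lambda>j acc. qadd (qmult (qpow q j) (a j)) acc) xs qzero)
    \<le> (\<Sum>j\<leftarrow>xs. qnorm q ^ j * qnorm (a j))"
proof (induction xs)
  case Nil
  then show ?case by (simp add: qnorm_qzero)
next
  case (Cons x xs)
  then show ?case
    using qnorm_qadd_le[of "qmult (qpow q x) (a x)"]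
    by (simp add: qnorm_qmult qnorm_qpow) (meson add_left_mono order_trans)
qed

lemma qnorm_pow_le_if_heval_eq_qzero:
  assumes "heval n r a q = qzero"
  shows "qnorm q ^ n \<le> (\<Sum>j\<le>r. qnorm q ^ j * qnorm (a j))"
proof -
  have "qnorm q ^ n = qnorm (foldr (\<lambda>j acc. qadd (qmult (qpow q j) (a j)) acc) [0..<Suc r] qzero)"
    using assms unfolding heval_def by (metis qnorm_eq_if_qadd_eq_qzero qnorm_qpow)
  also have "\<dots> \<le> (\<Sum>j\<leftarrow>[0..<Suc r]. qnorm q ^ j * qnorm (a j))"
    by (rule qnorm_foldr_le)
  also have "\<dots> = (\<Sum>j\<le>r. qnorm q ^ j * qnorm (a j))"
    by (simp add: interv_sum_list_conv_sum_set_nat atLeast0AtMost atLeastLessThanSuc_atLeastAtMost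
        del: upt_Suc)
  finally show ?thesis .
qed

lemma power_le_max_power:
  fixes L :: real
  assumes "0 < L" "1 \<le> j" "j \<le> r"
  shows "L ^ j \<le> max L (L ^ r)"
proof (cases "L \<le> 1")
  case True
  then have "L ^ j \<le> L ^ 1"
    using assms by (intro power_decreasing) auto
  then show ?thesis by simp
next
  case False
  then have "L ^ j \<le> L ^ r"
    using assms by (intro power_increasing) auto
  then show ?thesis by simp
qed

lemma le_one_plus_if_power_le_geometric:
  fixes t c :: real
  assumes "0 \<le> c" "1 \<le> r" "r < n"
    and bound: "t ^ n \<le> 1 + c * (\<Sum>j\<in>{1..r}. t ^ j)"
  shows "t \<le> 1 + c"
proof (rule ccontr)
  assume "\<not> t \<le> 1 + c"
  then have tc: "c < t - 1" and t1: "1 < t"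
    using \<open>0 \<le> c\<close> by auto
  define S where "S = (\<Sum>j\<in>{1..r}. t ^ j)"
  have "0 < S"
    unfolding S_def using assms t1 by (intro sum_pos) auto
  have "S \<le> (\<Sum>j<n. t ^ j)"
    unfolding S_def using assms t1 by (intro sum_mono2) auto
  then have "(t - 1) * S \<le> t ^ n - 1"
    using t1 by (simp add: power_diff_1_eq mult_left_mono)
  moreover have "c * S < (t - 1) * S"
    using \<open>0 < S\<close> tc by simp
  ultimately show False
    using bound unfolding S_def by linarith
qed

lemma le_root_bound_if_power_le_geometric:
  fixes x L :: real
  assumes L: "0 < L" and "0 \<le> x" and r: "1 \<le> r" "r < n"
    and bound: "x ^ n \<le> L ^ n * (\<Sum>j\<le>r. x ^ j)"
  shows "x \<le> L + max (L\<^sup>2) (L ^ (r + 1))"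
proof -
  define c where "c = max L (L ^ r)"
  define t where "t = x / L"
  have x_eq: "x = L * t"
    using L by (simp add: t_def)
  have "0 \<le> t"
    using L \<open>0 \<le> x\<close> by (simp add: t_def)
  have "L ^ n * t ^ n \<le> L ^ n * (\<Sum>j\<le>r. L ^ j * t ^ j)"
    using bound by (simp add: x_eq power_mult_distrib)
  then have "t ^ n \<le> (\<Sum>j\<le>r. L ^ j * t ^ j)"
    using L by simp
  also have "\<dots> = 1 + (\<Sum>j\<in>{1..r}. L ^ j * t ^ j)"
    by (simp add: atMost_atLeast0 sum.atLeast_Suc_atMost)
  also have "\<dots> \<le> 1 + c * (\<Sum>j\<in>{1..r}. t ^ j)"
  proof -
    have "L ^ j * t ^ j \<le> c * t ^ j" if "j \<in> {1..r}" for j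
      using L \<open>0 \<le> t\<close> that power_le_max_power[of L j r]
      by (intro mult_right_mono) (auto simp: c_def)
    then have "(\<Sum>j\<in>{1..r}. L ^ j * t ^ j) \<le> (\<Sum>j\<in>{1..r}. c * t ^ j)"
      by (rule sum_mono)
    then show ?thesis
      by (simp add: sum_distrib_left)
  qed
  finally have "t \<le> 1 + c"
    using le_one_plus_if_power_le_geometric[of c r n t] L r by (simp add: c_def)
  then have "x \<le> L + L * c"
    using mult_left_mono[of t "1 + c" L] L by (simp add: x_eq distrib_left)
  moreover have "L * c = max (L\<^sup>2) (L ^ (r + 1))"
    using L by (simp add: c_def power2_eq_square max_mult_distrib_left)
  ultimately show ?thesis by simp
qed

theorem theorem4:
  fixes n r :: nat and a :: "nat \<Rightarrow> quat" and q :: quat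
  assumes "n \<ge> 2" and "1 \<le> r" and "r \<le> n - 1"
    and "a r \<noteq> qzero"
    and "heval n r a q = qzero"
  shows "qnorm q \<le> root n (Max ((\<lambda>j. qnorm (a j)) ` {0..r}))
           + max ((root n (Max ((\<lambda>j. qnorm (a j)) ` {0..r})))\<^sup>2)
                 ((root n (Max ((\<lambda>j. qnorm (a j)) ` {0..r}))) ^ (r + 1))"
proof -
  define M where "M = Max ((\<lambda>j. qnorm (a j)) ` {0..r})"
  define L where "L = root n M"
  have a_le_M: "qnorm (a j) \<le> M" if "j \<le> r" for j
    unfolding M_def using that by (intro Max_ge) auto
  have "0 < M"
    using a_le_M[of r] qnorm_pos[OF assms(4)] by simp
  then have "0 < L" and L_pow: "L ^ n = M"
    using assms(1) by (simp_all add: L_def)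
  have "qnorm q ^ n \<le> (\<Sum>j\<le>r. qnorm q ^ j * qnorm (a j))"
    using assms(5) by (rule qnorm_pow_le_if_heval_eq_qzero)
  also have "\<dots> \<le> L ^ n * (\<Sum>j\<le>r. qnorm q ^ j)"
    unfolding L_pow sum_distrib_left using a_le_M
    by (intro sum_mono) (simp add: mult.commute mult_right_mono qnorm_nonneg)
  finally have "qnorm q \<le> L + max (L\<^sup>2) (L ^ (r + 1))"
    using \<open>0 < L\<close> assms(2,3) qnorm_nonneg
    by (intro le_root_bound_if_power_le_geometric) auto
  then show ?thesis
    unfolding L_def M_def .
qed

end
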